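(* Let $b>a>0$, $x\in\mathbb{R}^d$, and let $K$ be a cube containing $B(x,a)$ with $K\cap\partial B(x,b)\ne\emptyset$. Let $\mathcal{A},\mathcal{B}$ be finite subsets of $\mathbb{R}^d$ with $\mathcal{A}\subset B(x,a)$ and $\mathcal{B}\subset K\setminus B(x,a)$. If $\mathcal{B}$ contains a $K$-wall around $B(x,a)$ in $B(x,b)$, then $$|M(\mathcal{A}\cup\mathcal{B})-M(\mathcal{B})|\le c|\mathcal{A}|\,b$$ for a constant $c$ depending only on $d$. If no such wall exists, then $|M(\mathcal{A}\cup\mathcal{B})-M(\mathcal{B})|\le c|\mathcal{A}|\,\mathrm{diameter}(K)$.
   Context: For a finite set $X\subset\mathbb{R}^d$, $M(X)$ is the total length of a minimal spanning tree of the complete graph on $X$ with Euclidean edge lengths. $B(x,r)=x+[-r,r]^d$; $S(p,r)$ is the closed Euclidean ball of radius $r$ centered at $p$; $d(\cdot,\cdot)$ is Euclidean distance. Definition (wall): for $b>a>0$, $x\in\mathbb{R}^d$ and a cube $K\supset B(x,a)$ with $K\cap\partial B(x,b)\ne\emptyset$, a set $\mathfrak{W}\subset\mathbb{R}^d$ contains a $K$-wall around $B(x,a)$ in $B(x,b)$ if for every $p_1\in\partial B(x,a)$ and every $p_2\in K\cap\partial B(x,b)$ the set $K\cap\mathfrak{W}\cap S(p_1,\tfrac34 d(p_1,p_2))\cap S(p_2,\tfrac34 d(p_1,p_2))\cap(B(x,b)\setminus B(x,a))$ is nonempty. *)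

theory Defs
  imports "HOL-Analysis.Analysis"
begin

definition cg_edges :: "'a set \<Rightarrow> 'a set set" where
  "cg_edges X = {{p, q} | p q. p \<in> X \<and> q \<in> X \<and> p \<noteq> q}"

definition connects :: "'a set \<Rightarrow> 'a set set \<Rightarrow> bool" where
  "connects X E \<longleftrightarrow> (\<forall>u\<in>X. \<forall>v\<in>X. (u, v) \<in> {(p, q). {p, q} \<in> E}\<^sup>*)"

definition spanning_tree :: "'a set \<Rightarrow> 'a set set \<Rightarrow> bool" where
  "spanning_tree X E \<longleftrightarrow>
     E \<subseteq> cg_edges X \<and> connects X E \<and> (\<forall>e\<in>E. \<not> connects X (E - {e}))"

text \<open>M(X): total Euclidean length of a minimal spanning tree; the length of the
  edge {p,q} is diameter {p,q} = dist p q.\<close>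
definition MST_length :: "'a::metric_space set \<Rightarrow> real" where
  "MST_length X = Inf {(\<Sum>e\<in>E. diameter e) | E. spanning_tree X E}"

text \<open>B(x,r) = x + [-r,r]^d.\<close>
definition sqbox :: "'a::euclidean_space \<Rightarrow> real \<Rightarrow> 'a set" where
  "sqbox x r = cbox (x - r *\<^sub>R One) (x + r *\<^sub>R One)"

definition has_wall :: "'a::euclidean_space set \<Rightarrow> 'a set \<Rightarrow> 'a \<Rightarrow> real \<Rightarrow> real \<Rightarrow> bool" where
  "has_wall W K x a b \<longleftrightarrow>
     (\<forall>p1\<in>frontier (sqbox x a). \<forall>p2\<in>K \<inter> frontier (sqbox x b).
        K \<inter> W \<inter> cball p1 (3/4 * dist p1 p2) \<inter> cball p2 (3/4 * dist p1 p2)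
          \<inter> (sqbox x b - sqbox x a) \<noteq> {})"

end

theory Submission
  imports Defs
begin

text \<open>
  Fix a point b0 of B. Joining every point of A to b0 shows M(A \<union> B) \<le> M(B) + |A| L, where L
  bounds the distances from A to b0. Conversely, delete A from a minimal spanning tree T of
  A \<union> B and join every point of B adjacent to A in T to b0. A Euclidean minimal spanning tree has
  degree bounded by a packing constant N depending only on d, since two neighbours of a vertex
  subtend an angle of at least 60 degrees; so at most N |A| new edges are needed and
  M(B) \<le> M(A \<union> B) + N |A| L', where L' bounds the distances from those points to b0.
  Without further information L, L' \<le> diam K. If B contains a wall, every tree edge from A to B
  ends inside B(x,b): otherwise the edge crosses \<partial>B(x,a) at p1 and then \<partial>B(x,b) at p2, and a
  wall point q with d(q,p1), d(q,p2) \<le> 3/4 d(p1,p2) is strictly closer to both endpoints than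
  they are to each other, which the cycle property of minimal spanning trees forbids. Then one
  may take b0 in the wall and L, L' = O(b).
\<close>

section \<open>Spanning edge sets of complete graphs\<close>

definition edge_rel :: "'a set set \<Rightarrow> ('a \<times> 'a) set" where
  "edge_rel E = {(p, q). {p, q} \<in> E}"

definition total_length :: "'a::metric_space set set \<Rightarrow> real" where
  "total_length E = (\<Sum>e\<in>E. diameter e)"

definition spanning :: "'a set \<Rightarrow> 'a set set \<Rightarrow> bool" where
  "spanning X E \<longleftrightarrow> E \<subseteq> cg_edges X \<and> connects X E"

definition minimal_spanning :: "'a::metric_space set \<Rightarrow> 'a set set \<Rightarrow> bool" where
  "minimal_spanning X E \<longleftrightarrow>
     spanning X E \<and> (\<forall>E'. spanning X E' \<longrightarrow> total_length E \<le> total_length E')"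

lemma diameter_doubleton: "diameter {p, q::'a::metric_space} = dist p q"
proof (rule antisym)
  show "diameter {p, q} \<le> dist p q"
    unfolding diameter_def by (simp add: dist_commute) (intro cSup_least; auto)
  show "dist p q \<le> diameter {p, q}"
    by (rule diameter_bounded_bound) auto
qed

lemma cg_edgesE:
  assumes "e \<in> cg_edges X"
  obtains p q where "e = {p, q}" "p \<in> X" "q \<in> X" "p \<noteq> q"
  using assms unfolding cg_edges_def by blast

lemma doubleton_in_cg_edges_iff: "{p, q} \<in> cg_edges X \<longleftrightarrow> p \<in> X \<and> q \<in> X \<and> p \<noteq> q"
  unfolding cg_edges_def by (auto simp: doubleton_eq_iff)

lemma finite_cg_edges: "finite X \<Longrightarrow> finite (cg_edges X)"
proof -
  assume "finite X"
  have "cg_edges X \<subseteq> (\<lambda>(p, q). {p, q}) ` (X \<times> X)" unfolding cg_edges_def by auto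
  thus ?thesis using \<open>finite X\<close> by (meson finite_SigmaI finite_imageI finite_subset)
qed

lemma cg_edges_mono: "X \<subseteq> Y \<Longrightarrow> cg_edges X \<subseteq> cg_edges Y"
  unfolding cg_edges_def by blast

lemma diameter_nonneg_cg_edges: "e \<in> cg_edges X \<Longrightarrow> 0 \<le> diameter (e::'a::metric_space set)"
  by (erule cg_edgesE) (simp add: diameter_doubleton)

lemma connects_iff_edge_rel: "connects X E \<longleftrightarrow> (\<forall>u\<in>X. \<forall>v\<in>X. (u, v) \<in> (edge_rel E)\<^sup>*)"
  unfolding connects_def edge_rel_def by simp

lemma connectsD: "connects X E \<Longrightarrow> u \<in> X \<Longrightarrow> v \<in> X \<Longrightarrow> (u, v) \<in> (edge_rel E)\<^sup>*"
  unfolding connects_iff_edge_rel by blast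

lemma edge_rel_rtrancl_sym:
  assumes "(p, q) \<in> (edge_rel E)\<^sup>*"
  shows "(q, p) \<in> (edge_rel E)\<^sup>*"
proof -
  have "sym (edge_rel E)" unfolding sym_def edge_rel_def by (auto simp: insert_commute)
  from sym_rtrancl[OF this] assms show ?thesis by (rule symD)
qed

lemma edge_rel_rtrancl_mono: "E \<subseteq> F \<Longrightarrow> (p, q) \<in> (edge_rel E)\<^sup>* \<Longrightarrow> (p, q) \<in> (edge_rel F)\<^sup>*"
proof -
  assume "E \<subseteq> F" "(p, q) \<in> (edge_rel E)\<^sup>*"
  moreover have "edge_rel E \<subseteq> edge_rel F" using \<open>E \<subseteq> F\<close> unfolding edge_rel_def by auto
  ultimately show ?thesis using rtrancl_mono by blast
qed

lemma connects_from_root: "v \<in> X \<Longrightarrow> (\<And>u. u \<in> X \<Longrightarrow> (v, u) \<in> (edge_rel E)\<^sup>*) \<Longrightarrow> connects X E"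
  unfolding connects_iff_edge_rel by (meson edge_rel_rtrancl_sym rtrancl_trans)

lemma connects_Diff_edge_cases:
  assumes "connects X E" "{v, w} \<in> E" "v \<in> X" "u \<in> X"
  shows "(v, u) \<in> (edge_rel (E - {{v, w}}))\<^sup>* \<or> (w, u) \<in> (edge_rel (E - {{v, w}}))\<^sup>*"
proof -
  from connectsD[OF assms(1,3,4)] show ?thesis
  proof (induction rule: rtrancl_induct)
    case (step y z)
    show ?case
    proof (cases "{y, z} = {v, w}")
      case True
      hence "z = v \<or> z = w" by (auto simp: doubleton_eq_iff)
      thus ?thesis by auto
    next
      case False
      hence "(y, z) \<in> edge_rel (E - {{v, w}})" using step(2) unfolding edge_rel_def by auto
      thus ?thesis using step(3) by (meson rtrancl.rtrancl_into_rtrancl)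
    qed
  qed simp
qed

lemma spanning_edgeD: "spanning X E \<Longrightarrow> {v, w} \<in> E \<Longrightarrow> v \<in> X \<and> w \<in> X \<and> v \<noteq> w"
  unfolding spanning_def by (metis doubleton_in_cg_edges_iff subsetD)

lemma spanning_finite: "finite X \<Longrightarrow> spanning X E \<Longrightarrow> finite E"
  unfolding spanning_def by (meson finite_cg_edges finite_subset)

lemma spanning_exchange:
  assumes E: "spanning X E" "{v, w} \<in> E"
    and q: "(v, q) \<in> (edge_rel (E - {{v, w}}))\<^sup>*" "q \<in> X" "q \<noteq> w"
  shows "spanning X (insert {q, w} (E - {{v, w}}))"
proof -
  let ?E = "insert {q, w} (E - {{v, w}})"
  have vw: "v \<in> X" "w \<in> X" using spanning_edgeD[OF E] by simp_all
  have sub: "?E \<subseteq> cg_edges X"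
    using E(1) q(2,3) vw(2) unfolding spanning_def by (auto simp: doubleton_in_cg_edges_iff)
  have vw': "(v, w) \<in> (edge_rel ?E)\<^sup>*"
  proof -
    have "(v, q) \<in> (edge_rel ?E)\<^sup>*" using q(1) by (rule edge_rel_rtrancl_mono[rotated]) auto
    moreover have "(q, w) \<in> edge_rel ?E" unfolding edge_rel_def by auto
    ultimately show ?thesis by (meson rtrancl.rtrancl_into_rtrancl)
  qed
  have "(v, u) \<in> (edge_rel ?E)\<^sup>*" if "u \<in> X" for u
    using connects_Diff_edge_cases[of X E v w u] E that vw unfolding spanning_def
    by (meson edge_rel_rtrancl_mono rtrancl_trans subset_insertI vw')
  thus ?thesis unfolding spanning_def using sub connects_from_root[OF vw(1)] by blast
qed

lemma total_length_nonneg: "E \<subseteq> cg_edges X \<Longrightarrow> 0 \<le> total_length E"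
  unfolding total_length_def by (rule sum_nonneg) (use diameter_nonneg_cg_edges in blast)

lemma total_length_mono:
  assumes "finite F" "E \<subseteq> F" "F \<subseteq> cg_edges X"
  shows "total_length E \<le> total_length F"
  unfolding total_length_def using assms(3)
  by (intro sum_mono2[OF assms(1,2)]) (auto intro: diameter_nonneg_cg_edges)

lemma total_length_Un_le:
  assumes "finite E" "finite F" "E \<union> F \<subseteq> cg_edges X"
  shows "total_length (E \<union> F) \<le> total_length E + total_length F"
proof -
  have "total_length (E \<union> F) = total_length E + total_length F - total_length (E \<inter> F)"
    unfolding total_length_def using assms(1,2) by (simp add: sum_Un)
  moreover have "0 \<le> total_length (E \<inter> F)" using assms(3) by (intro total_length_nonneg) blast
  ultimately show ?thesis by simp
qed

lemma total_length_exchange_le: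
  assumes "finite E" "e \<in> E" "f \<in> cg_edges X" "E \<subseteq> cg_edges X"
  shows "total_length (insert f (E - {e})) \<le> total_length E - diameter e + diameter f"
proof -
  have "total_length (insert f (E - {e})) \<le> diameter f + total_length (E - {e})"
    unfolding total_length_def using assms
    by (cases "f \<in> E - {e}") (auto simp: insert_absorb diameter_nonneg_cg_edges)
  also have "total_length (E - {e}) = total_length E - diameter e"
    unfolding total_length_def using assms by (simp add: sum_diff1)
  finally show ?thesis by simp
qed

lemma total_length_star_le:
  assumes "finite S" "\<And>w. w \<in> S \<Longrightarrow> dist w b0 \<le> L"
  shows "total_length ((\<lambda>w. {w, b0}) ` S) \<le> real (card S) * L"
proof -
  have "total_length ((\<lambda>w. {w, b0}) ` S) \<le> (\<Sum>w\<in>S. diameter {w, b0})"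
    unfolding total_length_def using sum_image_le[OF assms(1), of diameter "\<lambda>w. {w, b0}"]
    by (simp add: diameter_doubleton o_def)
  also have "\<dots> \<le> (\<Sum>w\<in>S. L)"
    by (rule sum_mono) (use assms(2) in \<open>simp add: diameter_doubleton\<close>)
  finally show ?thesis by simp
qed

section \<open>Minimal spanning trees\<close>

lemma spanning_tree_subset:
  assumes "finite E" "spanning X E"
  shows "\<exists>T\<subseteq>E. spanning_tree X T"
  using assms
proof (induction E rule: finite_psubset_induct)
  case (psubset E)
  show ?case
  proof (cases "\<forall>e\<in>E. \<not> connects X (E - {e})")
    case True
    hence "spanning_tree X E" using psubset.prems unfolding spanning_tree_def spanning_def by blast
    thus ?thesis by blast
  next
    case False
    then obtain e where e: "e \<in> E" "connects X (E - {e})" by blast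
    have sub: "E - {e} \<subset> E" using e(1) by blast
    have "spanning X (E - {e})" using psubset.prems e(2) unfolding spanning_def by blast
    from psubset.IH[OF sub this] show ?thesis using sub by blast
  qed
qed

lemma spanning_cg_edges: "spanning X (cg_edges X)"
  unfolding spanning_def connects_iff_edge_rel
proof (intro conjI subset_refl ballI)
  fix u v assume "u \<in> X" "v \<in> X"
  show "(u, v) \<in> (edge_rel (cg_edges X))\<^sup>*"
  proof (cases "u = v")
    case False
    hence "(u, v) \<in> edge_rel (cg_edges X)"
      using \<open>u \<in> X\<close> \<open>v \<in> X\<close> unfolding edge_rel_def by (simp add: doubleton_in_cg_edges_iff)
    thus ?thesis by blast
  qed simp
qed

text \<open>Pruning a shortest spanning edge set to a spanning tree does not increase its length, so
  the infimum defining MST_length is attained.\<close>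
lemma minimal_spanning_exists:
  assumes "finite X"
  obtains E where "minimal_spanning X E" "MST_length X = total_length E"
proof -
  let ?C = "{E. spanning X E}"
  have fin: "finite ?C" using finite_cg_edges[OF assms]
    by (rule finite_subset[rotated, OF finite_Pow_iff[THEN iffD2]]) (auto simp: spanning_def)
  have ne: "total_length ` ?C \<noteq> {}" using spanning_cg_edges by blast
  obtain E0 where E0: "spanning X E0" "total_length E0 = Min (total_length ` ?C)"
    using Min_in[OF finite_imageI[OF fin] ne] by auto
  have min: "minimal_spanning X E0" unfolding minimal_spanning_def using E0 fin by auto
  have finE0: "finite E0" using spanning_finite[OF assms E0(1)] .
  obtain T where T: "T \<subseteq> E0" "spanning_tree X T" using spanning_tree_subset[OF finE0 E0(1)] by blast
  have sT: "spanning X T" using T(2) unfolding spanning_tree_def spanning_def by blast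
  have "total_length T \<le> total_length E0"
    using total_length_mono[OF finE0 T(1)] E0(1) unfolding spanning_def by blast
  moreover have "total_length E0 \<le> total_length T" using min sT by (simp add: minimal_spanning_def)
  ultimately have eq: "total_length T = total_length E0" by linarith
  have "MST_length X = total_length E0" unfolding MST_length_def
  proof (rule cInf_eq_minimum)
    show "total_length E0 \<in> {\<Sum>e\<in>E. diameter e |E. spanning_tree X E}"
      unfolding eq[symmetric] unfolding total_length_def using T(2) by blast
  next
    fix r assume "r \<in> {\<Sum>e\<in>E. diameter e |E. spanning_tree X E}"
    then obtain E where "spanning_tree X E" "r = total_length E" unfolding total_length_def by auto
    thus "total_length E0 \<le> r"
      using min unfolding minimal_spanning_def spanning_tree_def spanning_def by auto
  qed
  thus ?thesis using min that by blast
qed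

lemma MST_length_le:
  assumes "finite X" "spanning X E"
  shows "MST_length X \<le> total_length E"
proof -
  obtain E0 where "minimal_spanning X E0" "MST_length X = total_length E0"
    using minimal_spanning_exists[OF assms(1)] .
  thus ?thesis using assms(2) by (simp add: minimal_spanning_def)
qed

lemma MST_length_nonneg:
  assumes "finite X"
  shows "0 \<le> MST_length X"
proof -
  obtain E0 where "minimal_spanning X E0" "MST_length X = total_length E0"
    using minimal_spanning_exists[OF assms] .
  thus ?thesis by (auto simp: minimal_spanning_def spanning_def intro: total_length_nonneg)
qed

lemma MST_length_subsingleton:
  assumes "finite X" "\<And>u v. u \<in> X \<Longrightarrow> v \<in> X \<Longrightarrow> u = v"
  shows "MST_length X = 0"
proof -
  have "spanning X {}" unfolding spanning_def connects_iff_edge_rel using assms(2) by auto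
  from MST_length_le[OF assms(1) this] have "MST_length X \<le> 0" by (simp add: total_length_def)
  thus ?thesis using MST_length_nonneg[OF assms(1)] by simp
qed

lemma minimal_spanning_exchange_le:
  assumes "finite X" "minimal_spanning X E" "{v, w} \<in> E"
    and "(v, q) \<in> (edge_rel (E - {{v, w}}))\<^sup>*" "q \<in> X" "q \<noteq> w"
  shows "dist v w \<le> dist q w"
proof -
  have E: "spanning X E" using assms(2) by (simp add: minimal_spanning_def)
  have qw: "{q, w} \<in> cg_edges X" using spanning_edgeD[OF E assms(3)] assms(5,6)
    by (simp add: doubleton_in_cg_edges_iff)
  moreover have "total_length E \<le> total_length (insert {q, w} (E - {{v, w}}))"
    using assms(2) spanning_exchange[OF E assms(3-6)] by (simp add: minimal_spanning_def)
  moreover have "total_length (insert {q, w} (E - {{v, w}}))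
      \<le> total_length E - diameter {v, w} + diameter {q, w}"
    using E by (intro total_length_exchange_le[OF spanning_finite[OF assms(1) E] assms(3) qw])
      (simp add: spanning_def)
  ultimately show ?thesis by (simp add: diameter_doubleton)
qed

lemma minimal_spanning_edge_le_max:
  assumes "finite X" "minimal_spanning X E" "{v, w} \<in> E" "q \<in> X"
  shows "dist v w \<le> max (dist v q) (dist q w)"
proof (cases "q = v \<or> q = w")
  case False
  have E: "spanning X E" using assms(2) by (simp add: minimal_spanning_def)
  have vw: "v \<in> X" "w \<in> X" using spanning_edgeD[OF E assms(3)] by simp_all
  have vw_eq: "{w, v} = {v, w}" by (simp add: insert_commute)
  from connects_Diff_edge_cases[OF _ assms(3) vw(1) assms(4)] E
  consider "(v, q) \<in> (edge_rel (E - {{v, w}}))\<^sup>*" | "(w, q) \<in> (edge_rel (E - {{v, w}}))\<^sup>*"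
    unfolding spanning_def by blast
  thus ?thesis
  proof cases
    case 1 thus ?thesis using minimal_spanning_exchange_le[OF assms(1-3) 1 assms(4)] False by simp
  next
    case 2
    have "dist w v \<le> dist q v"
      using minimal_spanning_exchange_le[of X E w v q] assms 2 False by (simp add: vw_eq)
    thus ?thesis by (simp add: dist_commute)
  qed
qed auto

lemma minimal_spanning_neighbours:
  assumes "finite X" "minimal_spanning X E" "{v, w1} \<in> E" "{v, w2} \<in> E" "w1 \<noteq> w2"
  shows "dist v w2 \<le> dist w1 w2"
proof -
  have "spanning X E" using assms(2) by (simp add: minimal_spanning_def)
  hence w1: "w1 \<in> X" using spanning_edgeD[OF _ assms(3)] by blast
  have "{v, w1} \<noteq> {v, w2}" using assms(5) by (auto simp: doubleton_eq_iff)
  hence "(v, w1) \<in> edge_rel (E - {{v, w2}})" using assms(3) unfolding edge_rel_def by auto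
  thus ?thesis using minimal_spanning_exchange_le[OF assms(1,2,4) _ w1 assms(5)] by blast
qed

section \<open>Degree bound in Euclidean space\<close>

lemma norm_sgn_diff_ge_1:
  fixes a b :: "'a::real_inner"
  assumes "a \<noteq> 0" "b \<noteq> 0" "norm a \<le> norm (a - b)" "norm b \<le> norm (a - b)"
  shows "1 \<le> norm (sgn a - sgn b)"
proof -
  define A where "A = norm a"
  define B where "B = norm b"
  have pos: "A > 0" "B > 0" using assms by (auto simp: A_def B_def)
  have d: "norm (a - b)^2 = A^2 - 2 * (a \<bullet> b) + B^2"
    unfolding A_def B_def power2_norm_eq_inner by (simp add: inner_diff inner_commute algebra_simps)
  have "A^2 \<le> norm (a - b)^2" "B^2 \<le> norm (a - b)^2"
    using assms(3,4) by (simp_all add: A_def B_def power_mono)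
  hence "2 * (a \<bullet> b) \<le> min A B ^ 2" using d by (simp add: min_def)
  also have "\<dots> \<le> A * B" using pos by (simp add: min_def power2_eq_square)
  finally have ab: "2 * (a \<bullet> b) \<le> A * B" .
  have e1: "(a /\<^sub>R A) \<bullet> (a /\<^sub>R A) = 1" using pos by (simp add: A_def dot_square_norm power2_eq_square)
  have e2: "(b /\<^sub>R B) \<bullet> (b /\<^sub>R B) = 1" using pos by (simp add: B_def dot_square_norm power2_eq_square)
  have e3: "(a /\<^sub>R A) \<bullet> (b /\<^sub>R B) = (a \<bullet> b) / (A * B)" by (simp add: field_simps)
  have "norm (a /\<^sub>R A - b /\<^sub>R B)^2
      = (a /\<^sub>R A) \<bullet> (a /\<^sub>R A) - 2 * ((a /\<^sub>R A) \<bullet> (b /\<^sub>R B)) + (b /\<^sub>R B) \<bullet> (b /\<^sub>R B)"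
    unfolding power2_norm_eq_inner by (simp add: inner_diff inner_commute)
  also have "\<dots> = 2 - 2 * (a \<bullet> b) / (A * B)" using e1 e2 e3 by simp
  also have "\<dots> \<ge> 1" using ab pos by (simp add: field_simps)
  finally have "1 \<le> norm (a /\<^sub>R A - b /\<^sub>R B)^2" .
  hence "1 \<le> norm (a /\<^sub>R A - b /\<^sub>R B)"
    using power2_le_imp_le[of 1 "norm (a /\<^sub>R A - b /\<^sub>R B)"] by simp
  thus ?thesis by (simp add: A_def B_def sgn_div_norm)
qed

definition mst_degree_bound :: "'a::euclidean_space itself \<Rightarrow> nat" where
  "mst_degree_bound _ = (4 * DIM('a) + 1) ^ DIM('a)"

text \<open>Points of a 1-separated set in the unit ball have distinct floors of their coordinates
  scaled by 2d, and these floors range over 4d + 1 values per coordinate.\<close>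
lemma separated_in_unit_ball_card_le:
  fixes U :: "'a::euclidean_space set"
  assumes n: "\<And>u. u \<in> U \<Longrightarrow> norm u \<le> 1"
    and s: "\<And>u u'. u \<in> U \<Longrightarrow> u' \<in> U \<Longrightarrow> u \<noteq> u' \<Longrightarrow> 1 \<le> dist u u'"
  shows "finite U \<and> card U \<le> mst_degree_bound TYPE('a)"
proof -
  define D where "D = DIM('a)"
  have D: "D \<ge> 1" unfolding D_def by (simp add: DIM_positive Suc_leI)
  define m :: real where "m = 2 * real D"
  have m: "m > 0" using D by (simp add: m_def)
  define f where "f u = restrict (\<lambda>i. \<lfloor>(u \<bullet> i) * m\<rfloor>) Basis" for u :: 'a
  define T where "T = PiE Basis (\<lambda>_::'a. {- int (2*D) .. int (2*D)})"
  have fT: "f ` U \<subseteq> T"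
  proof
    fix z assume "z \<in> f ` U"
    then obtain u where u: "u \<in> U" "z = f u" by auto
    have "\<lfloor>(u \<bullet> i) * m\<rfloor> \<in> {- int (2*D) .. int (2*D)}" if "i \<in> Basis" for i
    proof -
      have "\<bar>u \<bullet> i\<bar> \<le> 1" using n[OF u(1)] Basis_le_norm[OF that, of u] by linarith
      hence "\<bar>(u \<bullet> i) * m\<bar> \<le> m" using m by (simp add: abs_mult)
      hence "- m \<le> (u \<bullet> i) * m" "(u \<bullet> i) * m \<le> m" by linarith+
      thus ?thesis unfolding m_def by (simp add: le_floor_iff floor_le_iff)
    qed
    thus "z \<in> T" using u unfolding T_def f_def by auto
  qed
  have inj: "inj_on f U"
  proof (rule inj_onI, rule ccontr)
    fix u u' assume uu: "u \<in> U" "u' \<in> U" "f u = f u'" "u \<noteq> u'"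
    have c: "\<bar>(u - u') \<bullet> i\<bar> < 1 / m" if "i \<in> Basis" for i
    proof -
      have "\<lfloor>(u \<bullet> i) * m\<rfloor> = \<lfloor>(u' \<bullet> i) * m\<rfloor>" using uu(3) that unfolding f_def by (metis restrict_apply')
      hence "\<bar>(u \<bullet> i) * m - (u' \<bullet> i) * m\<bar> < 1" by linarith
      moreover have "(u \<bullet> i) * m - (u' \<bullet> i) * m = ((u - u') \<bullet> i) * m"
        by (simp add: inner_diff_left algebra_simps)
      ultimately have "\<bar>(u - u') \<bullet> i\<bar> * m < 1" using m by (simp add: abs_mult)
      thus ?thesis using m by (simp add: field_simps)
    qed
    have "norm (u - u') \<le> (\<Sum>i\<in>Basis. \<bar>(u - u') \<bullet> i\<bar>)" by (rule norm_le_l1)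
    also have "\<dots> < (\<Sum>i\<in>(Basis::'a set). 1 / m)" using c by (intro sum_strict_mono) auto
    also have "\<dots> = 1/2" using D by (simp add: m_def D_def)
    finally show False using s uu by (fastforce simp: dist_norm)
  qed
  have fin: "finite T" unfolding T_def by (simp add: finite_PiE)
  have cT: "card T = mst_degree_bound TYPE('a)" unfolding T_def mst_degree_bound_def D_def
    by (simp add: card_PiE) (simp add: nat_add_distrib nat_mult_distrib)
  have "finite U" using inj fT fin by (meson finite_imageD finite_subset)
  thus ?thesis using card_inj_on_le[OF inj fT fin] cT by simp
qed

lemma minimal_spanning_degree_le:
  fixes X :: "'a::euclidean_space set"
  assumes "finite X" "minimal_spanning X E"
  shows "finite {w. {v, w} \<in> E} \<and> card {w. {v, w} \<in> E} \<le> mst_degree_bound TYPE('a)"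
proof -
  let ?W = "{w. {v, w} \<in> E}"
  have E: "spanning X E" using assms(2) by (simp add: minimal_spanning_def)
  have ne: "w \<noteq> v" if "w \<in> ?W" for w using that spanning_edgeD[OF E] by blast
  have sep: "1 \<le> dist (sgn (w1 - v)) (sgn (w2 - v))" if "w1 \<in> ?W" "w2 \<in> ?W" "w1 \<noteq> w2" for w1 w2
  proof -
    have "dist v w2 \<le> dist w1 w2" "dist v w1 \<le> dist w2 w1"
      using minimal_spanning_neighbours[OF assms, of v] that by auto
    hence "norm (w1 - v) \<le> norm ((w1 - v) - (w2 - v))" "norm (w2 - v) \<le> norm ((w1 - v) - (w2 - v))"
      by (simp_all add: dist_norm norm_minus_commute)
    from norm_sgn_diff_ge_1[OF _ _ this] ne that show ?thesis by (simp add: dist_norm)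
  qed
  have inj: "inj_on (\<lambda>w. sgn (w - v)) ?W"
    by (rule inj_onI, rule ccontr) (use sep in fastforce)
  have "finite ((\<lambda>w. sgn (w - v)) ` ?W) \<and> card ((\<lambda>w. sgn (w - v)) ` ?W) \<le> mst_degree_bound TYPE('a)"
  proof (rule separated_in_unit_ball_card_le)
    fix u assume "u \<in> (\<lambda>w. sgn (w - v)) ` ?W"
    thus "norm u \<le> 1" using ne by (auto simp: norm_sgn)
  next
    fix u u' assume "u \<in> (\<lambda>w. sgn (w - v)) ` ?W" "u' \<in> (\<lambda>w. sgn (w - v)) ` ?W" "u \<noteq> u'"
    thus "1 \<le> dist u u'" using sep by auto
  qed
  thus ?thesis using inj by (metis card_image finite_image_iff)
qed

section \<open>Comparing M(A \<union> B) with M(B)\<close>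

lemma MST_length_Un_le_add:
  fixes A B :: "'a::metric_space set"
  assumes "finite A" "finite B" "A \<inter> B = {}" "b0 \<in> B" "\<And>a. a \<in> A \<Longrightarrow> dist a b0 \<le> L"
  shows "MST_length (A \<union> B) \<le> MST_length B + real (card A) * L"
proof -
  obtain E where E: "minimal_spanning B E" "MST_length B = total_length E"
    using minimal_spanning_exists[OF assms(2)] by blast
  have sE: "spanning B E" using E(1) by (simp add: minimal_spanning_def)
  let ?G = "(\<lambda>a. {a, b0}) ` A"
  have Gsub: "?G \<subseteq> cg_edges (A \<union> B)" unfolding cg_edges_def using assms(3,4) by blast
  have Esub: "E \<subseteq> cg_edges (A \<union> B)" using sE cg_edges_mono[of B "A \<union> B"] by (auto simp: spanning_def)
  have reach: "(b0, u) \<in> (edge_rel (E \<union> ?G))\<^sup>*" if "u \<in> A \<union> B" for u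
  proof (cases "u \<in> B")
    case True
    hence "(b0, u) \<in> (edge_rel E)\<^sup>*" using connectsD[of B E b0 u] sE assms(4) by (simp add: spanning_def)
    thus ?thesis by (rule edge_rel_rtrancl_mono[rotated]) blast
  next
    case False
    hence "(b0, u) \<in> edge_rel (E \<union> ?G)" using that unfolding edge_rel_def by (auto simp: insert_commute)
    thus ?thesis by blast
  qed
  have "connects (A \<union> B) (E \<union> ?G)" by (rule connects_from_root[of b0]) (use assms(4) reach in auto)
  hence "spanning (A \<union> B) (E \<union> ?G)" unfolding spanning_def using Gsub Esub by blast
  hence "MST_length (A \<union> B) \<le> total_length (E \<union> ?G)" by (rule MST_length_le[rotated]) (use assms in simp)
  also have "\<dots> \<le> total_length E + total_length ?G"
    using Gsub Esub spanning_finite[OF assms(2) sE] assms(1) by (intro total_length_Un_le) auto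
  also have "total_length ?G \<le> real (card A) * L" by (rule total_length_star_le[OF assms(1,5)])
  finally show ?thesis using E(2) by simp
qed

lemma MST_length_le_card_mul:
  assumes "finite A" "0 \<le> L" "\<And>p q. p \<in> A \<Longrightarrow> q \<in> A \<Longrightarrow> dist p q \<le> L"
  shows "MST_length A \<le> real (card A) * L"
proof (cases "A = {}")
  case True thus ?thesis using MST_length_subsingleton[of A] by simp
next
  case False
  then obtain a0 where a0: "a0 \<in> A" by blast
  have "MST_length ((A - {a0}) \<union> {a0}) \<le> MST_length {a0} + real (card (A - {a0})) * L"
    by (rule MST_length_Un_le_add) (use assms a0 in auto)
  moreover have "(A - {a0}) \<union> {a0} = A" using a0 by blast
  moreover have "real (card (A - {a0})) * L \<le> real (card A) * L"
    using assms(1,2) by (intro mult_right_mono) (simp_all add: card_Diff1_le)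
  ultimately show ?thesis using MST_length_subsingleton[of "{a0}"] by simp
qed

lemma edge_rel_rtrancl_first_exit:
  fixes A B :: "'a set" and E :: "'a set set"
  defines "F \<equiv> {e \<in> E. e \<subseteq> B}"
  assumes "E \<subseteq> cg_edges (A \<union> B)" "(u, z) \<in> (edge_rel E)\<^sup>*" "u \<in> B" "z \<in> B"
  shows "(u, z) \<in> (edge_rel F)\<^sup>* \<or> (\<exists>w\<in>B. \<exists>a\<in>A. {a, w} \<in> E \<and> (u, w) \<in> (edge_rel F)\<^sup>*)"
proof -
  have "(z \<in> B \<and> (u, z) \<in> (edge_rel F)\<^sup>*) \<or> (\<exists>w\<in>B. \<exists>a\<in>A. {a, w} \<in> E \<and> (u, w) \<in> (edge_rel F)\<^sup>*)"
    using assms(3)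
  proof (induction rule: rtrancl_induct)
    case (step y z)
    have yz: "{y, z} \<in> E" using step(2) unfolding edge_rel_def by blast
    hence zAB: "z \<in> A \<union> B" using assms(2) by (auto simp: doubleton_in_cg_edges_iff)
    from step(3) show ?case
    proof (elim disjE conjE)
      assume y: "y \<in> B" "(u, y) \<in> (edge_rel F)\<^sup>*"
      show ?case
      proof (cases "z \<in> B")
        case True
        hence "(y, z) \<in> edge_rel F" using yz y unfolding edge_rel_def F_def by blast
        thus ?thesis using y True by (meson rtrancl.rtrancl_into_rtrancl)
      next
        case False
        hence "z \<in> A" using zAB by blast
        moreover have "{z, y} \<in> E" using yz by (simp add: insert_commute)
        ultimately show ?thesis using y by blast
      qed
    qed blast
  qed (use assms(4) in simp)
  thus ?thesis by blast
qed

lemma spanning_reattach: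
  fixes A B :: "'a set" and E :: "'a set set"
  defines "F \<equiv> {e \<in> E. e \<subseteq> B}" and "W \<equiv> {w \<in> B. \<exists>a\<in>A. {a, w} \<in> E}"
  assumes E: "spanning (A \<union> B) E" and b0: "b0 \<in> B"
  shows "spanning B (F \<union> (\<lambda>w. {w, b0}) ` (W - {b0}))"
proof -
  let ?G = "(\<lambda>w. {w, b0}) ` (W - {b0})"
  have Fsub: "F \<subseteq> cg_edges B"
    using E unfolding F_def spanning_def by (auto elim!: cg_edgesE simp: doubleton_in_cg_edges_iff)
  have Gsub: "?G \<subseteq> cg_edges B" unfolding W_def using b0 by (auto simp: doubleton_in_cg_edges_iff)
  have reach: "(u, b0) \<in> (edge_rel (F \<union> ?G))\<^sup>*" if u: "u \<in> B" for u
  proof -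
    have "(u, b0) \<in> (edge_rel E)\<^sup>*" using connectsD[of "A \<union> B" E u b0] E u b0 by (simp add: spanning_def)
    hence "(u, b0) \<in> (edge_rel F)\<^sup>* \<or> (\<exists>w\<in>W. (u, w) \<in> (edge_rel F)\<^sup>*)"
      using edge_rel_rtrancl_first_exit[of E A B u b0] E u b0 unfolding F_def W_def spanning_def by blast
    thus ?thesis
    proof (elim disjE bexE)
      fix w assume w: "w \<in> W" "(u, w) \<in> (edge_rel F)\<^sup>*"
      have uw: "(u, w) \<in> (edge_rel (F \<union> ?G))\<^sup>*" using w(2) by (rule edge_rel_rtrancl_mono[rotated]) blast
      have "(w, b0) \<in> (edge_rel (F \<union> ?G))\<^sup>*"
      proof (cases "w = b0")
        case False
        hence "(w, b0) \<in> edge_rel (F \<union> ?G)" using w(1) unfolding edge_rel_def by blast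
        thus ?thesis by blast
      qed simp
      thus ?thesis using uw by (rule rtrancl_trans[rotated])
    qed (rule edge_rel_rtrancl_mono[rotated], assumption, blast)
  qed
  have "connects B (F \<union> ?G)" by (rule connects_from_root[OF b0]) (rule edge_rel_rtrancl_sym[OF reach])
  thus ?thesis unfolding spanning_def using Fsub Gsub by blast
qed

lemma minimal_spanning_attached_card_le:
  fixes A :: "'a::euclidean_space set"
  assumes "finite A" "finite X" "minimal_spanning X E"
  shows "finite {w \<in> B. \<exists>a\<in>A. {a, w} \<in> E}
    \<and> card {w \<in> B. \<exists>a\<in>A. {a, w} \<in> E} \<le> card A * mst_degree_bound TYPE('a)"
proof -
  let ?U = "\<Union>a\<in>A. {w. {a, w} \<in> E}"
  have sub: "{w \<in> B. \<exists>a\<in>A. {a, w} \<in> E} \<subseteq> ?U" by blast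
  have deg: "finite {w. {a, w} \<in> E} \<and> card {w. {a, w} \<in> E} \<le> mst_degree_bound TYPE('a)" for a
    by (rule minimal_spanning_degree_le[OF assms(2,3)])
  have finU: "finite ?U" using assms(1) deg by blast
  have "card ?U \<le> (\<Sum>a\<in>A. card {w. {a, w} \<in> E})" by (rule card_UN_le[OF assms(1)])
  also have "\<dots> \<le> (\<Sum>a\<in>A. mst_degree_bound TYPE('a))" by (rule sum_mono) (use deg in blast)
  finally show ?thesis using finite_subset[OF sub finU] card_mono[OF finU sub] by simp
qed

lemma MST_length_le_total_length_add:
  fixes A B :: "'a::euclidean_space set"
  assumes "finite A" "finite B" "b0 \<in> B" "minimal_spanning (A \<union> B) E" "0 \<le> L"
    and W: "\<And>w a. w \<in> B \<Longrightarrow> a \<in> A \<Longrightarrow> {a, w} \<in> E \<Longrightarrow> dist w b0 \<le> L"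
  shows "MST_length B \<le> total_length E + real (card A) * real (mst_degree_bound TYPE('a)) * L"
proof -
  define F where "F = {e \<in> E. e \<subseteq> B}"
  define Wb where "Wb = {w \<in> B. \<exists>a\<in>A. {a, w} \<in> E}"
  define G where "G = (\<lambda>w. {w, b0}) ` (Wb - {b0})"
  have E: "spanning (A \<union> B) E" using assms(4) by (simp add: minimal_spanning_def)
  have finE: "finite E" using spanning_finite[OF _ E] assms(1,2) by blast
  have cW: "finite Wb" "card Wb \<le> card A * mst_degree_bound TYPE('a)"
    using minimal_spanning_attached_card_le[where B = B, OF assms(1) _ assms(4)] assms(1,2)
    unfolding Wb_def by auto
  have FG: "spanning B (F \<union> G)" unfolding F_def G_def Wb_def by (rule spanning_reattach[OF E assms(3)])
  have "MST_length B \<le> total_length (F \<union> G)" by (rule MST_length_le[OF assms(2) FG])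
  also have "\<dots> \<le> total_length F + total_length G"
    using FG finE cW(1) unfolding spanning_def F_def G_def by (intro total_length_Un_le) auto
  also have "total_length F \<le> total_length E"
    using E finE unfolding F_def spanning_def by (intro total_length_mono) auto
  also have "total_length G \<le> real (card (Wb - {b0})) * L"
    unfolding G_def by (rule total_length_star_le) (use cW(1) W in \<open>auto simp: Wb_def\<close>)
  also have "\<dots> \<le> real (card Wb) * L"
    by (rule mult_right_mono[OF _ assms(5)]) (simp add: card_Diff1_le cW(1))
  also have "\<dots> \<le> real (card A) * real (mst_degree_bound TYPE('a)) * L"
    by (rule mult_right_mono[OF _ assms(5)]) (metis cW(2) of_nat_le_iff of_nat_mult)
  finally show ?thesis by simp
qed

lemma MST_length_Un_diff_le:
  fixes A B :: "'a::euclidean_space set"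
  assumes "finite A" "finite B" "A \<inter> B = {}" "b0 \<in> B" "0 \<le> L"
    and "\<And>a. a \<in> A \<Longrightarrow> dist a b0 \<le> L"
    and "\<And>E w a. minimal_spanning (A \<union> B) E \<Longrightarrow> w \<in> B \<Longrightarrow> a \<in> A \<Longrightarrow> {a, w} \<in> E \<Longrightarrow> dist w b0 \<le> L"
  shows "\<bar>MST_length (A \<union> B) - MST_length B\<bar> \<le> real (card A) * (real (mst_degree_bound TYPE('a)) + 1) * L"
proof -
  obtain E where E: "minimal_spanning (A \<union> B) E" "MST_length (A \<union> B) = total_length E"
    using minimal_spanning_exists[of "A \<union> B"] assms(1,2) by auto
  have "MST_length (A \<union> B) \<le> MST_length B + real (card A) * L"
    by (rule MST_length_Un_le_add[OF assms(1-4,6)])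
  moreover have "MST_length B \<le> total_length E + real (card A) * real (mst_degree_bound TYPE('a)) * L"
    by (rule MST_length_le_total_length_add[OF assms(1,2,4) E(1) assms(5)]) (rule assms(7)[OF E(1)])
  moreover have "0 \<le> real (card A) * L" "0 \<le> real (card A) * real (mst_degree_bound TYPE('a)) * L"
    using assms(5) by simp_all
  ultimately show ?thesis using E(2) by (simp add: algebra_simps abs_le_iff)
qed

section \<open>Cubes and walls\<close>

lemma mem_sqbox: "p \<in> sqbox x r \<longleftrightarrow> (\<forall>i\<in>Basis. \<bar>p \<bullet> i - x \<bullet> i\<bar> \<le> r)"
  unfolding sqbox_def mem_box by (auto simp: inner_diff_left inner_add_left inner_sum_left_Basis abs_le_iff)

lemma mem_interior_sqbox: "p \<in> interior (sqbox x r) \<longleftrightarrow> (\<forall>i\<in>Basis. \<bar>p \<bullet> i - x \<bullet> i\<bar> < r)"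
  unfolding sqbox_def interior_cbox mem_box
  by (auto simp: inner_diff_left inner_add_left inner_sum_left_Basis abs_less_iff)

lemma sqbox_mono: "r \<le> s \<Longrightarrow> sqbox x r \<subseteq> sqbox x s"
  unfolding mem_sqbox subset_iff by force

lemma sqbox_subset_interior: "r < s \<Longrightarrow> sqbox x r \<subseteq> interior (sqbox x s)"
  unfolding mem_sqbox mem_interior_sqbox subset_iff by force

lemma closed_sqbox: "closed (sqbox x r)"
  unfolding sqbox_def by (rule closed_cbox)

lemma convex_sqbox: "convex (sqbox x r)"
  unfolding sqbox_def by (rule convex_box(1))

lemma bounded_sqbox: "bounded (sqbox x r)"
  unfolding sqbox_def by (rule bounded_cbox)

lemma frontier_sqbox_nonempty: "0 \<le> r \<Longrightarrow> frontier (sqbox x r) \<noteq> {}"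
proof -
  assume "0 \<le> r"
  hence "x \<in> sqbox x r" by (simp add: mem_sqbox)
  moreover have "sqbox x r \<noteq> UNIV" using bounded_sqbox not_bounded_UNIV by metis
  ultimately show ?thesis unfolding frontier_eq_empty by blast
qed

lemma dist_le_of_mem_sqbox:
  fixes p q x :: "'a::euclidean_space"
  assumes "p \<in> sqbox x r" "q \<in> sqbox x r"
  shows "dist p q \<le> 2 * r * real DIM('a)"
proof -
  have "\<bar>(p - q) \<bullet> i\<bar> \<le> 2 * r" if "i \<in> Basis" for i
    using assms that unfolding mem_sqbox by (fastforce simp: inner_diff_left abs_le_iff)
  hence "(\<Sum>i\<in>Basis. \<bar>(p - q) \<bullet> i\<bar>) \<le> (\<Sum>i\<in>(Basis::'a set). 2 * r)" by (intro sum_mono) auto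
  moreover have "dist p q \<le> (\<Sum>i\<in>Basis. \<bar>(p - q) \<bullet> i\<bar>)" unfolding dist_norm by (rule norm_le_l1)
  ultimately show ?thesis by (simp add: algebra_simps)
qed

lemma closed_segment_crosses_sqboxes:
  assumes "r < s" "v \<in> sqbox x r" "w \<notin> sqbox x s"
  obtains p1 p2 where "p1 \<in> closed_segment v w" "p1 \<in> frontier (sqbox x r)"
    "p2 \<in> closed_segment p1 w" "p2 \<in> frontier (sqbox x s)" "p1 \<noteq> p2"
proof -
  have rs: "sqbox x r \<subseteq> sqbox x s" using assms(1) by (simp add: sqbox_mono)
  have "closed_segment v w \<inter> frontier (sqbox x r) \<noteq> {}"
    by (rule connected_Int_frontier) (use assms(2,3) rs in auto)
  then obtain p1 where p1: "p1 \<in> closed_segment v w" "p1 \<in> frontier (sqbox x r)" by blast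
  have p1r: "p1 \<in> sqbox x r" using p1(2) frontier_subset_closed[OF closed_sqbox] by blast
  have "closed_segment p1 w \<inter> frontier (sqbox x s) \<noteq> {}"
    by (rule connected_Int_frontier) (use p1r rs assms(3) in auto)
  then obtain p2 where p2: "p2 \<in> closed_segment p1 w" "p2 \<in> frontier (sqbox x s)" by blast
  have "p1 \<in> interior (sqbox x s)" using p1r sqbox_subset_interior[OF assms(1)] by blast
  hence "p1 \<noteq> p2" using p2(2) unfolding frontier_def by blast
  thus ?thesis using that p1 p2 by blast
qed

lemma dist_lt_of_near_subsegment:
  fixes v w :: "'a::euclidean_space"
  assumes "p1 \<in> closed_segment v w" "p2 \<in> closed_segment p1 w" "p1 \<noteq> p2"
    and "dist p1 q \<le> 3/4 * dist p1 p2" "dist p2 q \<le> 3/4 * dist p1 p2"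
  shows "max (dist v q) (dist q w) < dist v w"
proof -
  have d1: "dist v w = dist v p1 + dist p1 w" using assms(1) by (simp add: between_mem_segment[symmetric] between)
  have d2: "dist p1 w = dist p1 p2 + dist p2 w" using assms(2) by (simp add: between_mem_segment[symmetric] between)
  have "dist v q \<le> dist v p1 + dist p1 q" "dist q w \<le> dist p2 q + dist p2 w"
    by (simp_all add: dist_triangle dist_triangle3)
  moreover have "0 < dist p1 p2" using assms(3) by simp
  ultimately have "dist v q < dist v w" "dist q w < dist v w"
    using d1 d2 assms(4,5) zero_le_dist[of v p1] zero_le_dist[of p2 w] by linarith+
  thus ?thesis by simp
qed

lemma minimal_spanning_wall_edge_in_sqbox:
  fixes A B K :: "'a::euclidean_space set"
  assumes "finite A" "finite B" "A \<inter> B = {}" "minimal_spanning (A \<union> B) E"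
    and wall: "has_wall B K x a b" and "A \<subseteq> sqbox x a" "B \<subseteq> K" "convex K" "sqbox x a \<subseteq> K" "a < b"
    and e: "v \<in> A" "w \<in> B" "{v, w} \<in> E"
  shows "w \<in> sqbox x b"
proof (rule ccontr)
  assume w: "w \<notin> sqbox x b"
  have v: "v \<in> sqbox x a" using e(1) assms(6) by blast
  obtain p1 p2 where p: "p1 \<in> closed_segment v w" "p1 \<in> frontier (sqbox x a)"
    "p2 \<in> closed_segment p1 w" "p2 \<in> frontier (sqbox x b)" "p1 \<noteq> p2"
    using closed_segment_crosses_sqboxes[OF \<open>a < b\<close> v w] by blast
  have "p1 \<in> K" using p(2) frontier_subset_closed[OF closed_sqbox] assms(9) by blast
  moreover have "w \<in> K" using e(2) assms(7) by blast
  ultimately have "p2 \<in> K" using closed_segment_subset[OF _ _ assms(8)] p(3) by blast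
  hence "K \<inter> B \<inter> cball p1 (3/4 * dist p1 p2) \<inter> cball p2 (3/4 * dist p1 p2) \<inter> (sqbox x b - sqbox x a) \<noteq> {}"
    using wall p(2,4) unfolding has_wall_def by blast
  then obtain q where q: "q \<in> B" "dist p1 q \<le> 3/4 * dist p1 p2" "dist p2 q \<le> 3/4 * dist p1 p2"
    by auto
  have "dist v w \<le> max (dist v q) (dist q w)"
    by (rule minimal_spanning_edge_le_max[OF _ assms(4) e(3)]) (use assms(1,2) q(1) in auto)
  thus False using dist_lt_of_near_subsegment[OF p(1,3,5) q(2,3)] by simp
qed

section \<open>Adding points inside a cube\<close>

lemma MST_length_Un_diff_le_diameter:
  fixes A B K :: "'a::euclidean_space set"
  assumes "finite A" "finite B" "A \<inter> B = {}" "bounded K" "A \<subseteq> K" "B \<subseteq> K"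
  shows "\<bar>MST_length (A \<union> B) - MST_length B\<bar>
    \<le> real (card A) * (real (mst_degree_bound TYPE('a)) + 1) * diameter K"
proof -
  have diam: "0 \<le> diameter K" "\<And>p q. p \<in> K \<Longrightarrow> q \<in> K \<Longrightarrow> dist p q \<le> diameter K"
    using assms(4) by (simp_all add: diameter_ge_0 diameter_bounded_bound)
  show ?thesis
  proof (cases "B = {}")
    case True
    have "MST_length A \<le> real (card A) * diameter K"
      using assms(5) by (intro MST_length_le_card_mul[OF assms(1) diam(1)] diam(2)) auto
    moreover have "real (card A) * diameter K
        \<le> (real (mst_degree_bound TYPE('a)) + 1) * (real (card A) * diameter K)"
      using mult_right_mono[of 1 "real (mst_degree_bound TYPE('a)) + 1" "real (card A) * diameter K"]
        diam(1)
      by simp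
    ultimately show ?thesis
      using True MST_length_subsingleton[of B] MST_length_nonneg[OF assms(1)] by (simp add: algebra_simps)
  next
    case False
    then obtain b0 where b0: "b0 \<in> B" by blast
    show ?thesis
    proof (rule MST_length_Un_diff_le[OF assms(1-3) b0 diam(1)])
      fix p assume "p \<in> A" thus "dist p b0 \<le> diameter K" using assms(5,6) b0 diam(2) by blast
    next
      fix E w p assume "w \<in> B" thus "dist w b0 \<le> diameter K" using assms(6) b0 diam(2) by blast
    qed
  qed
qed

lemma MST_length_Un_diff_le_wall:
  fixes A B K :: "'a::euclidean_space set"
  assumes "0 < a" "a < b" "convex K" "sqbox x a \<subseteq> K" "K \<inter> frontier (sqbox x b) \<noteq> {}"
    and "finite A" "finite B" "A \<subseteq> sqbox x a" "B \<subseteq> K - sqbox x a" and wall: "has_wall B K x a b"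
  shows "\<bar>MST_length (A \<union> B) - MST_length B\<bar>
    \<le> real (card A) * (real (mst_degree_bound TYPE('a)) + 1) * (2 * b * real DIM('a))"
proof -
  obtain p1 p2 where "p1 \<in> frontier (sqbox x a)" "p2 \<in> K \<inter> frontier (sqbox x b)"
    using assms(1,5) frontier_sqbox_nonempty[of a x] by fastforce
  then obtain b0 where b0: "b0 \<in> B" "b0 \<in> sqbox x b"
    using wall unfolding has_wall_def by blast
  have ab: "sqbox x a \<subseteq> sqbox x b" using assms(2) by (simp add: sqbox_mono)
  show ?thesis
  proof (rule MST_length_Un_diff_le[OF assms(6,7) _ b0(1)])
    show "A \<inter> B = {}" using assms(8,9) by blast
    show "0 \<le> 2 * b * real DIM('a)" using assms(1,2) by simp
  next
    fix p assume "p \<in> A"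
    hence "p \<in> sqbox x b" using assms(8) ab by blast
    thus "dist p b0 \<le> 2 * b * real DIM('a)" using b0(2) by (rule dist_le_of_mem_sqbox)
  next
    fix E w v assume "minimal_spanning (A \<union> B) E" "w \<in> B" "v \<in> A" "{v, w} \<in> E"
    hence "w \<in> sqbox x b"
      using assms(2-4,6-9) by (intro minimal_spanning_wall_edge_in_sqbox[OF _ _ _ _ wall]) auto
    thus "dist w b0 \<le> 2 * b * real DIM('a)" using b0(2) by (rule dist_le_of_mem_sqbox)
  qed
qed

lemma MST_length_Un_diff_le_cube:
  fixes A B :: "'a::euclidean_space set"
  defines "c \<equiv> 2 * real DIM('a) * (real (mst_degree_bound TYPE('a)) + 1)"
  assumes "0 < a" "a < b" "K = sqbox y s" "sqbox x a \<subseteq> K" "K \<inter> frontier (sqbox x b) \<noteq> {}"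
    and "finite A" "finite B" "A \<subseteq> sqbox x a" "B \<subseteq> K - sqbox x a"
  shows "has_wall B K x a b \<Longrightarrow> \<bar>MST_length (A \<union> B) - MST_length B\<bar> \<le> c * real (card A) * b"
    and "\<bar>MST_length (A \<union> B) - MST_length B\<bar> \<le> c * real (card A) * diameter K"
proof -
  define N where "N = real (mst_degree_bound TYPE('a)) + 1"
  have K: "convex K" "bounded K" using assms(4) convex_sqbox bounded_sqbox by auto
  show "\<bar>MST_length (A \<union> B) - MST_length B\<bar> \<le> c * real (card A) * b" if "has_wall B K x a b"
  proof -
    have "\<bar>MST_length (A \<union> B) - MST_length B\<bar> \<le> real (card A) * N * (2 * b * real DIM('a))"
      unfolding N_def by (rule MST_length_Un_diff_le_wall) (use assms K that in auto)
    also have "\<dots> = c * real (card A) * b" by (simp add: c_def N_def mult_ac)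
    finally show ?thesis .
  qed
  have "0 \<le> real (card A) * N * diameter K"
    using diameter_ge_0[OF K(2)] by (intro mult_nonneg_nonneg) (simp_all add: N_def)
  moreover have "1 \<le> 2 * real DIM('a)" using DIM_positive[where 'a='a] by linarith
  ultimately have scale: "real (card A) * N * diameter K \<le> c * real (card A) * diameter K"
    using mult_right_mono[of 1 "2 * real DIM('a)" "real (card A) * N * diameter K"]
    by (simp add: c_def N_def mult_ac)
  have "\<bar>MST_length (A \<union> B) - MST_length B\<bar> \<le> real (card A) * N * diameter K"
    unfolding N_def by (rule MST_length_Un_diff_le_diameter) (use assms K in auto)
  thus "\<bar>MST_length (A \<union> B) - MST_length B\<bar> \<le> c * real (card A) * diameter K"
    using scale by linarith
qed

theorem lemma7p5:
  "\<exists>c::real. \<forall>(a::real) b (x::'a::euclidean_space) K y s (A::'a set) B.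
     0 < a \<and> a < b \<and> K = sqbox y s \<and> sqbox x a \<subseteq> K \<and> K \<inter> frontier (sqbox x b) \<noteq> {}
     \<and> finite A \<and> finite B \<and> A \<subseteq> sqbox x a \<and> B \<subseteq> K - sqbox x a \<longrightarrow>
       (has_wall B K x a b \<longrightarrow> \<bar>MST_length (A \<union> B) - MST_length B\<bar> \<le> c * real (card A) * b)
     \<and> (\<not> has_wall B K x a b \<longrightarrow> \<bar>MST_length (A \<union> B) - MST_length B\<bar> \<le> c * real (card A) * diameter K)"
  by (rule exI[of _ "2 * real DIM('a) * (real (mst_degree_bound TYPE('a)) + 1)"])
    (auto intro: MST_length_Un_diff_le_cube)

end
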